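(* Let $\gamma\in(\tfrac12,1)$ and $\kappa>0$. There exists a constant $c>0$ (depending only on $\gamma$ and $\kappa$) such that for every $\ell\in(0,1)$, every $t_0\in(0,1)$, every $n\ge2$ and every $s\in(0,1)$, \[ \nu^{t_0}_{\ell,n}(s)\le \alpha_n s^{-\gamma}+\mathbf 1\{s\ge\ell\}\,\beta_n s^{\gamma-1}, \] where the sequences $(\alpha_n),(\beta_n)$ are defined by $\alpha_1=\kappa t_0^{\gamma-1}$, $\beta_1=\kappa t_0^{-\gamma}$ and \[ \alpha_{n+1}=c\big(\alpha_n\log(1/\ell)+\beta_n\big),\qquad \beta_{n+1}=c\big(\alpha_n\ell^{1-2\gamma}+\beta_n\log(1/\ell)\big). \]
   Context: For $\ell\in(0,1)$, $t_0\in(0,1)$, $\kappa>0$ and $n\in\mathbb N$, define for $s\in(0,1)$ \[ \nu^{t_0}_{\ell,n}(s):=\int_\ell^1\mathrm dt_1\cdots\int_\ell^1\mathrm dt_{n-1}\;\kappa\,(t_{n-1}\wedge s)^{-\gamma}(t_{n-1}\vee s)^{\gamma-1}\prod_{k=1}^{n-1}\kappa\,(t_{k-1}\wedge t_k)^{-\gamma}(t_{k-1}\vee t_k)^{\gamma-1} \] (for $n=1$ there are no integrals and the product is empty, so $\nu^{t_0}_{\ell,1}(s)=\kappa(t_0\wedge s)^{-\gamma}(t_0\vee s)^{\gamma-1}$). Equivalently $\nu^{t_0}_{\ell,n}(s)=\int_\ell^1\mathrm du\,\nu^{t_0}_{\ell,n-1}(u)\,\kappa(u\wedge s)^{-\gamma}(u\vee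 s)^{\gamma-1}$ for $n\ge2$. *)

theory Defs
  imports "HOL-Analysis.Analysis"
begin

definition kern :: "real \<Rightarrow> real \<Rightarrow> real \<Rightarrow> real \<Rightarrow> real" where
  "kern \<kappa> \<gamma> x y = \<kappa> * (min x y) powr (-\<gamma>) * (max x y) powr (\<gamma> - 1)"

text \<open>nu kappa gamma l t0 n s is the paper's nu^{t0}_{l,n}(s) for n \<ge> 1 (value 0 at n = 0 is a dummy).\<close>
fun nu :: "real \<Rightarrow> real \<Rightarrow> real \<Rightarrow> real \<Rightarrow> nat \<Rightarrow> real \<Rightarrow> real" where
  "nu \<kappa> \<gamma> l t0 0 s = 0"
| "nu \<kappa> \<gamma> l t0 (Suc 0) s = kern \<kappa> \<gamma> t0 s"
| "nu \<kappa> \<gamma> l t0 (Suc (Suc n)) s =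
     integral {l..1} (\<lambda>u. nu \<kappa> \<gamma> l t0 (Suc n) u * kern \<kappa> \<gamma> u s)"

text \<open>ab c kappa gamma l t0 m = (alpha_{m+1}, beta_{m+1}).\<close>
fun ab :: "real \<Rightarrow> real \<Rightarrow> real \<Rightarrow> real \<Rightarrow> real \<Rightarrow> nat \<Rightarrow> real \<times> real" where
  "ab c \<kappa> \<gamma> l t0 0 = (\<kappa> * t0 powr (\<gamma> - 1), \<kappa> * t0 powr (-\<gamma>))"
| "ab c \<kappa> \<gamma> l t0 (Suc m) =
     (let a = fst (ab c \<kappa> \<gamma> l t0 m); b = snd (ab c \<kappa> \<gamma> l t0 m) in
      (c * (a * ln (1 / l) + b), c * (a * l powr (1 - 2 * \<gamma>) + b * ln (1 / l))))"

definition alpha_seq :: "real \<Rightarrow> real \<Rightarrow> real \<Rightarrow> real \<Rightarrow> real \<Rightarrow> nat \<Rightarrow> real" where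
  "alpha_seq c \<kappa> \<gamma> l t0 n = fst (ab c \<kappa> \<gamma> l t0 (n - 1))"

definition beta_seq :: "real \<Rightarrow> real \<Rightarrow> real \<Rightarrow> real \<Rightarrow> real \<Rightarrow> nat \<Rightarrow> real" where
  "beta_seq c \<kappa> \<gamma> l t0 n = snd (ab c \<kappa> \<gamma> l t0 (n - 1))"

end

theory Submission
  imports Defs
begin

text \<open>
  Every iterate is dominated by an envelope a u^(-\<gamma>) + b u^(\<gamma>-1). Integrating such an
  envelope against the kernel splits at u = s: below s the kernel is \<kappa> u^(-\<gamma>) s^(\<gamma>-1)
  and the integrands become u^(-2\<gamma>) and 1/u, above s it is \<kappa> s^(-\<gamma>) u^(\<gamma>-1) and they
  become 1/u and u^(2\<gamma>-2). Since \<gamma> > 1/2 the power integrals over [l,1] are bounded by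
  l^(1-2\<gamma>)/(2\<gamma>-1) and 1/(2\<gamma>-1), the logarithmic ones by log(1/l), so the result is again
  an envelope whose coefficients obey the stated recursion with c = \<kappa>/(2\<gamma>-1).
  The part below s only exists when s \<ge> l, whence the indicator.
\<close>

definition envelope :: "real \<Rightarrow> real \<Rightarrow> real \<Rightarrow> real \<Rightarrow> real" where
  "envelope \<gamma> a b u = a * u powr (-\<gamma>) + b * u powr (\<gamma> - 1)"

lemma has_integral_powr:
  fixes a b p :: real
  assumes "0 < a" "a \<le> b" "p \<noteq> -1"
  shows "((\<lambda>u. u powr p) has_integral (b powr (p + 1) - a powr (p + 1)) / (p + 1)) {a..b}"
proof -
  have "((\<lambda>u. u powr p) has_integral (b powr (p + 1) / (p + 1) - a powr (p + 1) / (p + 1))) {a..b}"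
  proof (intro fundamental_theorem_of_calculus)
    fix x assume "x \<in> {a..b}"
    then have "0 < x" using assms by auto
    then show "((\<lambda>x. x powr (p + 1) / (p + 1)) has_vector_derivative x powr p) (at x within {a..b})"
      using assms
      by (auto intro!: derivative_eq_intros simp: powr_diff
               simp flip: has_real_derivative_iff_has_vector_derivative)
  qed (use assms in auto)
  then show ?thesis by (simp add: diff_divide_distrib)
qed

lemma has_integral_powr_minus_one:
  fixes a b :: real
  assumes "0 < a" "a \<le> b"
  shows "((\<lambda>u. u powr (-1)) has_integral (ln b - ln a)) {a..b}"
proof (intro fundamental_theorem_of_calculus)
  fix x assume "x \<in> {a..b}"
  then have "0 < x" using assms by auto
  then show "(ln has_vector_derivative x powr (-1)) (at x within {a..b})"
    by (auto intro!: derivative_eq_intros simp: powr_minus divide_inverse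
             simp flip: has_real_derivative_iff_has_vector_derivative)
qed (use assms in auto)

lemma kern_nonneg: "0 \<le> \<kappa> \<Longrightarrow> 0 \<le> kern \<kappa> \<gamma> x y"
  unfolding kern_def by simp

lemma kern_le_envelope:
  assumes "0 \<le> \<kappa>"
  shows "kern \<kappa> \<gamma> x y \<le> envelope \<gamma> (\<kappa> * x powr (\<gamma> - 1)) (\<kappa> * x powr (-\<gamma>)) y"
proof (cases "x \<le> y")
  case True
  then have "kern \<kappa> \<gamma> x y = \<kappa> * x powr (-\<gamma>) * y powr (\<gamma> - 1)"
    by (simp add: kern_def)
  then show ?thesis using assms by (simp add: envelope_def)
next
  case False
  then have "kern \<kappa> \<gamma> x y = \<kappa> * x powr (\<gamma> - 1) * y powr (-\<gamma>)"
    by (simp add: kern_def mult_ac)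
  then show ?thesis using assms by (simp add: envelope_def)
qed

lemma envelope_kern_below:
  assumes "0 < u" "u \<le> s"
  shows "envelope \<gamma> a b u * kern \<kappa> \<gamma> u s
           = \<kappa> * s powr (\<gamma> - 1) * (a * u powr (-2 * \<gamma>) + b * u powr (-1))"
proof -
  have "u powr (-2 * \<gamma>) = u powr (-\<gamma>) * u powr (-\<gamma>)"
       "u powr (-1) = u powr (\<gamma> - 1) * u powr (-\<gamma>)"
    by (simp_all flip: powr_add)
  then show ?thesis
    using assms by (simp add: envelope_def kern_def algebra_simps)
qed

lemma envelope_kern_above:
  assumes "0 < s" "s \<le> u"
  shows "envelope \<gamma> a b u * kern \<kappa> \<gamma> u s
           = \<kappa> * s powr (-\<gamma>) * (a * u powr (-1) + b * u powr (2 * \<gamma> - 2))"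
proof -
  have "u powr (-1) = u powr (-\<gamma>) * u powr (\<gamma> - 1)"
       "u powr (2 * \<gamma> - 2) = u powr (\<gamma> - 1) * u powr (\<gamma> - 1)"
    by (simp_all flip: powr_add)
  then show ?thesis
    using assms by (simp add: envelope_def kern_def algebra_simps)
qed

lemma has_integral_envelope_kern_below:
  assumes "0 < x" "x \<le> y" "y \<le> s" "\<gamma> \<noteq> 1/2"
  shows "((\<lambda>u. envelope \<gamma> a b u * kern \<kappa> \<gamma> u s) has_integral
           \<kappa> * s powr (\<gamma> - 1) * (a * ((y powr (1 - 2 * \<gamma>) - x powr (1 - 2 * \<gamma>)) / (1 - 2 * \<gamma>))
                                  + b * (ln y - ln x))) {x..y}"
proof (rule has_integral_eq[OF _ has_integral_mult_right[OF has_integral_add]])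
  show "((\<lambda>u. a * u powr (-2 * \<gamma>)) has_integral
          a * ((y powr (1 - 2 * \<gamma>) - x powr (1 - 2 * \<gamma>)) / (1 - 2 * \<gamma>))) {x..y}"
    using has_integral_mult_right[OF has_integral_powr[of x y "-2 * \<gamma>"]] assms
    by (simp add: add.commute)
  show "((\<lambda>u. b * u powr (-1)) has_integral b * (ln y - ln x)) {x..y}"
    using has_integral_mult_right[OF has_integral_powr_minus_one] assms by blast
qed (use assms envelope_kern_below in auto)

lemma has_integral_envelope_kern_above:
  assumes "0 < s" "s \<le> x" "x \<le> y" "\<gamma> \<noteq> 1/2"
  shows "((\<lambda>u. envelope \<gamma> a b u * kern \<kappa> \<gamma> u s) has_integral
           \<kappa> * s powr (-\<gamma>) * (a * (ln y - ln x)
                                + b * ((y powr (2 * \<gamma> - 1) - x powr (2 * \<gamma> - 1)) / (2 * \<gamma> - 1)))) {x..y}"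
proof (rule has_integral_eq[OF _ has_integral_mult_right[OF has_integral_add]])
  show "((\<lambda>u. a * u powr (-1)) has_integral a * (ln y - ln x)) {x..y}"
    using has_integral_mult_right[OF has_integral_powr_minus_one] assms by simp
  show "((\<lambda>u. b * u powr (2 * \<gamma> - 2)) has_integral
          b * ((y powr (2 * \<gamma> - 1) - x powr (2 * \<gamma> - 1)) / (2 * \<gamma> - 1))) {x..y}"
    using has_integral_mult_right[OF has_integral_powr[of x y "2 * \<gamma> - 2"]] assms
    by (simp add: add.commute)
qed (use assms envelope_kern_above in auto)

lemma le_divide_of_le_one:
  fixes x d :: real
  assumes "0 \<le> x" "0 < d" "d \<le> 1"
  shows "x \<le> x / d"
  using assms mult_left_le[of d x] by (simp add: le_divide_eq)

lemma envelope_kern_below_le: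
  fixes \<gamma> \<kappa> a b l s :: real
  assumes "1/2 < \<gamma>" "\<gamma> < 1" "0 \<le> \<kappa>" "0 < l" "l \<le> s" "s \<le> 1" "0 \<le> a" "0 \<le> b"
  shows "\<kappa> * s powr (\<gamma> - 1) * (a * ((s powr (1 - 2 * \<gamma>) - l powr (1 - 2 * \<gamma>)) / (1 - 2 * \<gamma>))
                                  + b * (ln s - ln l))
         \<le> \<kappa> / (2 * \<gamma> - 1) * (a * l powr (1 - 2 * \<gamma>) + b * ln (1 / l)) * s powr (\<gamma> - 1)"
proof -
  have "(s powr (1 - 2 * \<gamma>) - l powr (1 - 2 * \<gamma>)) / (1 - 2 * \<gamma>)
        = (l powr (1 - 2 * \<gamma>) - s powr (1 - 2 * \<gamma>)) / (2 * \<gamma> - 1)"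
    by (metis minus_diff_eq minus_divide_divide)
  also have "\<dots> \<le> l powr (1 - 2 * \<gamma>) / (2 * \<gamma> - 1)"
    using assms by (intro divide_right_mono) auto
  finally have pow: "(s powr (1 - 2 * \<gamma>) - l powr (1 - 2 * \<gamma>)) / (1 - 2 * \<gamma>)
                     \<le> l powr (1 - 2 * \<gamma>) / (2 * \<gamma> - 1)" .
  have "ln s - ln l \<le> ln (1 / l)"
    using assms by (simp add: ln_div)
  moreover have "ln (1 / l) \<le> ln (1 / l) / (2 * \<gamma> - 1)"
    using assms by (intro le_divide_of_le_one) auto
  ultimately have log: "ln s - ln l \<le> ln (1 / l) / (2 * \<gamma> - 1)" by linarith
  have "a * ((s powr (1 - 2 * \<gamma>) - l powr (1 - 2 * \<gamma>)) / (1 - 2 * \<gamma>)) + b * (ln s - ln l)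
        \<le> (a * l powr (1 - 2 * \<gamma>) + b * ln (1 / l)) / (2 * \<gamma> - 1)"
    using mult_left_mono[OF pow, of a] mult_left_mono[OF log, of b] assms
    by (simp add: add_divide_distrib)
  from mult_left_mono[OF this, of "\<kappa> * s powr (\<gamma> - 1)"] show ?thesis
    using assms by (simp add: field_simps)
qed

lemma envelope_kern_above_le:
  fixes \<gamma> \<kappa> a b l m s :: real
  assumes "1/2 < \<gamma>" "\<gamma> < 1" "0 \<le> \<kappa>" "0 < l" "l \<le> m" "m \<le> 1" "0 \<le> a" "0 \<le> b"
  shows "\<kappa> * s powr (-\<gamma>) * (a * (ln 1 - ln m)
                             + b * ((1 powr (2 * \<gamma> - 1) - m powr (2 * \<gamma> - 1)) / (2 * \<gamma> - 1)))
         \<le> \<kappa> / (2 * \<gamma> - 1) * (a * ln (1 / l) + b) * s powr (-\<gamma>)"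
proof -
  have pow: "(1 powr (2 * \<gamma> - 1) - m powr (2 * \<gamma> - 1)) / (2 * \<gamma> - 1) \<le> 1 / (2 * \<gamma> - 1)"
    using assms by (simp add: divide_simps)
  have "ln 1 - ln m \<le> ln (1 / l)"
    using assms by (simp add: ln_div)
  moreover have "ln (1 / l) \<le> ln (1 / l) / (2 * \<gamma> - 1)"
    using assms by (intro le_divide_of_le_one) auto
  ultimately have log: "ln 1 - ln m \<le> ln (1 / l) / (2 * \<gamma> - 1)" by linarith
  have "a * (ln 1 - ln m) + b * ((1 powr (2 * \<gamma> - 1) - m powr (2 * \<gamma> - 1)) / (2 * \<gamma> - 1))
        \<le> (a * ln (1 / l) + b) / (2 * \<gamma> - 1)"
    using mult_left_mono[OF log, of a] mult_left_mono[OF pow, of b] assms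
    by (simp add: add_divide_distrib)
  from mult_left_mono[OF this, of "\<kappa> * s powr (-\<gamma>)"] show ?thesis
    using assms by (simp add: field_simps)
qed

lemma has_integral_envelope_kern_le:
  fixes \<gamma> \<kappa> a b l s :: real
  assumes \<gamma>: "1/2 < \<gamma>" "\<gamma> < 1" and \<kappa>: "0 \<le> \<kappa>" and l: "0 < l" "l \<le> 1"
    and s: "0 < s" "s \<le> 1" and ab: "0 \<le> a" "0 \<le> b"
  obtains J where "((\<lambda>u. envelope \<gamma> a b u * kern \<kappa> \<gamma> u s) has_integral J) {l..1}"
    and "J \<le> \<kappa> / (2 * \<gamma> - 1) * (a * ln (1 / l) + b) * s powr (-\<gamma>)
             + (if l \<le> s then \<kappa> / (2 * \<gamma> - 1) * (a * l powr (1 - 2 * \<gamma>) + b * ln (1 / l))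
                                * s powr (\<gamma> - 1) else 0)"
proof -
  have \<gamma>_ne: "\<gamma> \<noteq> 1/2" using \<gamma> by simp
  show ?thesis
  proof (cases "l \<le> s")
    case True
    note below = has_integral_envelope_kern_below[OF l(1) True order_refl \<gamma>_ne, of a b \<kappa>]
      and above = has_integral_envelope_kern_above[OF s(1) order_refl s(2) \<gamma>_ne, of a b \<kappa>]
    show ?thesis
      using that[OF has_integral_combine[OF True s(2) below above]] True
        envelope_kern_below_le[OF \<gamma> \<kappa> l(1) True s(2) ab]
        envelope_kern_above_le[OF \<gamma> \<kappa> l(1) True s(2) ab, of s]
      by simp
  next
    case False
    from has_integral_envelope_kern_above[of s l 1 \<gamma> a b \<kappa>] s l False \<gamma>_ne
    show ?thesis
      using that envelope_kern_above_le[OF \<gamma> \<kappa> l(1) order_refl l(2) ab, of s] by simp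
  qed
qed

lemma integral_kern_le:
  fixes \<gamma> \<kappa> a b l s :: real and f :: "real \<Rightarrow> real"
  assumes \<gamma>: "1/2 < \<gamma>" "\<gamma> < 1" and \<kappa>: "0 \<le> \<kappa>" and l: "0 < l" "l \<le> 1"
    and s: "0 < s" "s \<le> 1" and ab: "0 \<le> a" "0 \<le> b"
    and f: "\<And>u. u \<in> {l..1} \<Longrightarrow> f u \<le> envelope \<gamma> a b u"
  shows "integral {l..1} (\<lambda>u. f u * kern \<kappa> \<gamma> u s)
         \<le> \<kappa> / (2 * \<gamma> - 1) * (a * ln (1 / l) + b) * s powr (-\<gamma>)
             + (if l \<le> s then \<kappa> / (2 * \<gamma> - 1) * (a * l powr (1 - 2 * \<gamma>) + b * ln (1 / l))
                                * s powr (\<gamma> - 1) else 0)"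
    (is "_ \<le> ?R")
proof -
  obtain J where J: "((\<lambda>u. envelope \<gamma> a b u * kern \<kappa> \<gamma> u s) has_integral J) {l..1}" "J \<le> ?R"
    using has_integral_envelope_kern_le[OF \<gamma> \<kappa> l s ab] .
  have "0 \<le> J"
    using ab \<kappa> by (intro has_integral_nonneg[OF J(1)]) (simp add: envelope_def kern_nonneg)
  show ?thesis
  proof (cases "(\<lambda>u. f u * kern \<kappa> \<gamma> u s) integrable_on {l..1}")
    case True
    have "integral {l..1} (\<lambda>u. f u * kern \<kappa> \<gamma> u s) \<le> J"
      using has_integral_le[OF integrable_integral[OF True] J(1)] f \<kappa>
      by (simp add: kern_nonneg mult_right_mono)
    with J(2) show ?thesis by linarith
  next
    case False
    with \<open>0 \<le> J\<close> J(2) show ?thesis by (simp add: not_integrable_integral)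
  qed
qed

lemma ab_nonneg:
  fixes c \<kappa> \<gamma> l t0 :: real
  assumes "0 \<le> c" "0 \<le> \<kappa>" "0 < l" "l \<le> 1"
  shows "0 \<le> fst (ab c \<kappa> \<gamma> l t0 m) \<and> 0 \<le> snd (ab c \<kappa> \<gamma> l t0 m)"
proof (induction m)
  case 0
  then show ?case using assms by simp
next
  case (Suc m)
  moreover have "0 \<le> ln (1 / l)" using assms by simp
  ultimately show ?case
    using assms by (auto simp: Let_def intro!: mult_nonneg_nonneg add_nonneg_nonneg)
qed

lemma nu_le_envelope:
  fixes \<gamma> \<kappa> l t0 u :: real
  assumes \<gamma>: "1/2 < \<gamma>" "\<gamma> < 1" and \<kappa>: "0 \<le> \<kappa>" and l: "0 < l" "l \<le> 1" and u: "u \<in> {l..1}"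
  defines "c \<equiv> \<kappa> / (2 * \<gamma> - 1)"
  shows "nu \<kappa> \<gamma> l t0 (Suc m) u \<le> envelope \<gamma> (fst (ab c \<kappa> \<gamma> l t0 m)) (snd (ab c \<kappa> \<gamma> l t0 m)) u"
  using u
proof (induction m arbitrary: u)
  case 0
  then show ?case using kern_le_envelope[OF \<kappa>] by simp
next
  case (Suc m)
  have "0 \<le> c" using \<gamma> \<kappa> by (simp add: c_def)
  with ab_nonneg[OF _ \<kappa> l] have ab: "0 \<le> fst (ab c \<kappa> \<gamma> l t0 m)" "0 \<le> snd (ab c \<kappa> \<gamma> l t0 m)"
    by auto
  from Suc.prems l have "0 < u" "u \<le> 1" "l \<le> u" by auto
  have "nu \<kappa> \<gamma> l t0 (Suc (Suc m)) u = integral {l..1} (\<lambda>v. nu \<kappa> \<gamma> l t0 (Suc m) v * kern \<kappa> \<gamma> v u)"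
    by simp
  also have "\<dots> \<le> c * (fst (ab c \<kappa> \<gamma> l t0 m) * ln (1 / l) + snd (ab c \<kappa> \<gamma> l t0 m)) * u powr (-\<gamma>)
                  + c * (fst (ab c \<kappa> \<gamma> l t0 m) * l powr (1 - 2 * \<gamma>) + snd (ab c \<kappa> \<gamma> l t0 m) * ln (1 / l))
                      * u powr (\<gamma> - 1)"
    using integral_kern_le[OF \<gamma> \<kappa> l \<open>0 < u\<close> \<open>u \<le> 1\<close> ab Suc.IH] \<open>l \<le> u\<close>
    by (simp add: c_def)
  also have "\<dots> = envelope \<gamma> (fst (ab c \<kappa> \<gamma> l t0 (Suc m))) (snd (ab c \<kappa> \<gamma> l t0 (Suc m))) u"
    by (simp add: envelope_def Let_def algebra_simps)
  finally show ?case .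
qed

lemma nu_le_alpha_beta:
  fixes \<gamma> \<kappa> l t0 s :: real
  assumes \<gamma>: "1/2 < \<gamma>" "\<gamma> < 1" and \<kappa>: "0 \<le> \<kappa>" and l: "0 < l" "l \<le> 1"
    and s: "0 < s" "s \<le> 1" and "2 \<le> n"
  defines "c \<equiv> \<kappa> / (2 * \<gamma> - 1)"
  shows "nu \<kappa> \<gamma> l t0 n s \<le> alpha_seq c \<kappa> \<gamma> l t0 n * s powr (-\<gamma>)
           + (if l \<le> s then beta_seq c \<kappa> \<gamma> l t0 n * s powr (\<gamma> - 1) else 0)"
proof -
  obtain m where n: "n = Suc (Suc m)"
    using \<open>2 \<le> n\<close> by (metis add_2_eq_Suc le_Suc_ex)
  have "0 \<le> c" using \<gamma> \<kappa> by (simp add: c_def)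
  with ab_nonneg[OF _ \<kappa> l] have ab: "0 \<le> fst (ab c \<kappa> \<gamma> l t0 m)" "0 \<le> snd (ab c \<kappa> \<gamma> l t0 m)"
    by auto
  have env: "nu \<kappa> \<gamma> l t0 (Suc m) u \<le> envelope \<gamma> (fst (ab c \<kappa> \<gamma> l t0 m)) (snd (ab c \<kappa> \<gamma> l t0 m)) u"
    if "u \<in> {l..1}" for u
    using nu_le_envelope[OF \<gamma> \<kappa> l that] unfolding c_def .
  have "nu \<kappa> \<gamma> l t0 n s = integral {l..1} (\<lambda>u. nu \<kappa> \<gamma> l t0 (Suc m) u * kern \<kappa> \<gamma> u s)"
    by (simp add: n)
  also have "\<dots> \<le> c * (fst (ab c \<kappa> \<gamma> l t0 m) * ln (1 / l) + snd (ab c \<kappa> \<gamma> l t0 m)) * s powr (-\<gamma>)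
                  + (if l \<le> s then c * (fst (ab c \<kappa> \<gamma> l t0 m) * l powr (1 - 2 * \<gamma>)
                                       + snd (ab c \<kappa> \<gamma> l t0 m) * ln (1 / l)) * s powr (\<gamma> - 1) else 0)"
    using integral_kern_le[OF \<gamma> \<kappa> l s ab env] unfolding c_def .
  finally show ?thesis
    by (cases "l \<le> s") (simp_all add: n alpha_seq_def beta_seq_def Let_def)
qed

theorem lemma2p9:
  fixes \<gamma> \<kappa> :: real
  assumes "1/2 < \<gamma>" and "\<gamma> < 1" and "0 < \<kappa>"
  shows "\<exists>c>0. \<forall>l t0 s :: real. \<forall>n :: nat.
           0 < l \<longrightarrow> l < 1 \<longrightarrow> 0 < t0 \<longrightarrow> t0 < 1 \<longrightarrow> 2 \<le> n \<longrightarrow> 0 < s \<longrightarrow> s < 1 \<longrightarrow>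
           nu \<kappa> \<gamma> l t0 n s \<le> alpha_seq c \<kappa> \<gamma> l t0 n * s powr (-\<gamma>)
              + (if l \<le> s then beta_seq c \<kappa> \<gamma> l t0 n * s powr (\<gamma> - 1) else 0)"
proof (intro exI[of _ "\<kappa> / (2 * \<gamma> - 1)"] conjI allI impI)
  show "0 < \<kappa> / (2 * \<gamma> - 1)" using assms by simp
qed (use nu_le_alpha_beta[OF assms(1,2) less_imp_le[OF assms(3)]] in simp)

end
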